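(* Let $\varphi\neq0$ and $\phi$ be real numbers and $$M_A=\begin{pmatrix} i\cosh\varphi & e^{i\phi}\sinh\varphi\\ e^{-i\phi}\sinh\varphi & -i\cosh\varphi\end{pmatrix},\qquad M_B=\begin{pmatrix} i&0\\0&-i\end{pmatrix}.$$ Let $M_1,M_2,\dots$ be independent random matrices, each equal to $M_A$ or $M_B$ with probability $1/2$, and write $\Pi_n=M_1\cdots M_n=\begin{pmatrix}\alpha_n&\beta_n\\ \beta_n^*&\alpha_n^*\end{pmatrix}$. Then for every integer $k\ge1$, $$\mathbb{E}\left(|\alpha_{2k-1}|^2+|\beta_{2k-1}|^2\right)=\mathbb{E}\left(|\alpha_{2k}|^2+|\beta_{2k}|^2\right)=(\cosh\varphi)^{2k},$$ and consequently $\lim_{n\to\infty}\frac{1}{2n}\log\mathbb{E}\left(|\alpha_n|^2+|\beta_n|^2\right)=\frac12\log\cosh\varphi>0$.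
   Context: $\mathbb{E}$ denotes expectation over the random choices of $M_1,\dots,M_n$. The matrices $M_A,M_B$ lie in $\operatorname{SU}(1,1)$ and are traceless (reflection matrices). *)

theory Defs
  imports "HOL-Analysis.Analysis" "HOL-Probability.Probability"
begin

definition MA :: "real \<Rightarrow> real \<Rightarrow> complex^2^2" where
  "MA \<phi>' \<phi> = vector [vector [\<i> * of_real (cosh \<phi>'), cis \<phi> * of_real (sinh \<phi>')],
                     vector [cis (-\<phi>) * of_real (sinh \<phi>'), - \<i> * of_real (cosh \<phi>')]]"

definition MB :: "complex^2^2" where
  "MB = vector [vector [\<i>, 0], vector [0, - \<i>]]"

definition Pi_prod :: "real \<Rightarrow> real \<Rightarrow> bool list \<Rightarrow> complex^2^2" where
  "Pi_prod \<phi>' \<phi> cs = foldr (\<lambda>c P. (if c then MA \<phi>' \<phi> else MB) ** P) cs (mat 1)"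

definition Enorm :: "real \<Rightarrow> real \<Rightarrow> nat \<Rightarrow> real" where
  "Enorm \<phi>' \<phi> n = measure_pmf.expectation (pmf_of_set {cs :: bool list. length cs = n})
     (\<lambda>cs. (cmod (Pi_prod \<phi>' \<phi> cs $ 1 $ 1))\<^sup>2 + (cmod (Pi_prod \<phi>' \<phi> cs $ 1 $ 2))\<^sup>2)"

end

theory Submission
  imports Defs
begin

(* Every product has the shape [[alpha, beta], [conj beta, conj alpha]], and two real quantities of
   its first row suffice: the energy |alpha|^2 + |beta|^2 and the twist Im (e^(-i phi) alpha beta).
   Multiplying by M_B fixes the energy and negates the twist; multiplying by M_A acts on
   (energy, twist) by the matrix [[c^2 + s^2, -4cs], [cs, -(c^2 + s^2)]] with c = cosh phi',
   s = sinh phi'. Summed over both choices, the totals over all choice sequences of length n evolve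
   by N = [[2c^2, -4cs], [cs, -2c^2]], and N^2 = 4c^2 I since c^2 - s^2 = 1. From the initial
   value (1, 0) the total energy is therefore 2^n c^(n + n mod 2), i.e. the expectation is
   c^(n + n mod 2). *)

lemma Pi_prod_Cons:
  "Pi_prod \<phi>' \<phi> (c # cs) = (if c then MA \<phi>' \<phi> else MB) ** Pi_prod \<phi>' \<phi> cs"
  by (simp add: Pi_prod_def)

lemma Pi_prod_second_row:
  "Pi_prod \<phi>' \<phi> cs $ 2 $ 1 = cnj (Pi_prod \<phi>' \<phi> cs $ 1 $ 2)"
  "Pi_prod \<phi>' \<phi> cs $ 2 $ 2 = cnj (Pi_prod \<phi>' \<phi> cs $ 1 $ 1)"
  by (induction cs)
    (auto simp: Pi_prod_def matrix_matrix_mult_def sum_2 MA_def MB_def cis_cnj mat_def)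

lemma Pi_prod_Cons_MA:
  "Pi_prod \<phi>' \<phi> (True # cs) $ 1 $ 1
     = \<i> * cosh \<phi>' * Pi_prod \<phi>' \<phi> cs $ 1 $ 1
       + cis \<phi> * sinh \<phi>' * cnj (Pi_prod \<phi>' \<phi> cs $ 1 $ 2)"
  "Pi_prod \<phi>' \<phi> (True # cs) $ 1 $ 2
     = \<i> * cosh \<phi>' * Pi_prod \<phi>' \<phi> cs $ 1 $ 2
       + cis \<phi> * sinh \<phi>' * cnj (Pi_prod \<phi>' \<phi> cs $ 1 $ 1)"
  by (simp_all add: Pi_prod_Cons matrix_matrix_mult_def sum_2 MA_def Pi_prod_second_row)

lemma Pi_prod_Cons_MB:
  "Pi_prod \<phi>' \<phi> (False # cs) $ 1 $ 1 = \<i> * Pi_prod \<phi>' \<phi> cs $ 1 $ 1"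
  "Pi_prod \<phi>' \<phi> (False # cs) $ 1 $ 2 = \<i> * Pi_prod \<phi>' \<phi> cs $ 1 $ 2"
  by (simp_all add: Pi_prod_Cons matrix_matrix_mult_def sum_2 MB_def)

lemma complex_of_real_Im: "complex_of_real (Im z) = (z - cnj z) / (2 * \<i>)"
  by (simp add: complex_eq_iff)

lemma complex_of_real_norm_power2: "(complex_of_real (cmod z))\<^sup>2 = z * cnj z"
  using complex_norm_square[of z] by simp

(* In \<complex>, |z|^2 and Im z are polynomials in z and cnj z, so both identities below become
   ring identities modulo e * cnj e = 1. *)

lemma norm_power2_sum_twisted_step:
  fixes a b e :: complex and c s :: real
  assumes "e * cnj e = 1"
  shows "(cmod (\<i> * c * a + e * s * cnj b))\<^sup>2 + (cmod (\<i> * c * b + e * s * cnj a))\<^sup>2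
       = (c\<^sup>2 + s\<^sup>2) * ((cmod a)\<^sup>2 + (cmod b)\<^sup>2) - 4 * c * s * Im (cnj e * a * b)"
proof -
  have "complex_of_real
          ((cmod (\<i> * c * a + e * s * cnj b))\<^sup>2 + (cmod (\<i> * c * b + e * s * cnj a))\<^sup>2)
      = complex_of_real
          ((c\<^sup>2 + s\<^sup>2) * ((cmod a)\<^sup>2 + (cmod b)\<^sup>2) - 4 * c * s * Im (cnj e * a * b))"
    unfolding of_real_add of_real_diff of_real_mult of_real_power of_real_numeral
      complex_of_real_Im complex_of_real_norm_power2
    using assms by (simp add: field_simps) algebra
  then show ?thesis
    by (rule of_real_eq_iff[THEN iffD1])
qed

lemma Im_twisted_step:
  fixes a b e :: complex and c s :: real
  assumes "e * cnj e = 1"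
  shows "Im (cnj e * (\<i> * c * a + e * s * cnj b) * (\<i> * c * b + e * s * cnj a))
       = c * s * ((cmod a)\<^sup>2 + (cmod b)\<^sup>2) - (c\<^sup>2 + s\<^sup>2) * Im (cnj e * a * b)"
proof -
  have "complex_of_real
          (Im (cnj e * (\<i> * c * a + e * s * cnj b) * (\<i> * c * b + e * s * cnj a)))
      = complex_of_real
          (c * s * ((cmod a)\<^sup>2 + (cmod b)\<^sup>2) - (c\<^sup>2 + s\<^sup>2) * Im (cnj e * a * b))"
    unfolding of_real_add of_real_diff of_real_mult of_real_power of_real_numeral
      complex_of_real_Im complex_of_real_norm_power2
    using assms by (simp add: field_simps) algebra
  then show ?thesis
    by (rule of_real_eq_iff[THEN iffD1])
qed

definition energy :: "real \<Rightarrow> real \<Rightarrow> bool list \<Rightarrow> real" where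
  "energy \<phi>' \<phi> cs
     = (cmod (Pi_prod \<phi>' \<phi> cs $ 1 $ 1))\<^sup>2 + (cmod (Pi_prod \<phi>' \<phi> cs $ 1 $ 2))\<^sup>2"

definition twist :: "real \<Rightarrow> real \<Rightarrow> bool list \<Rightarrow> real" where
  "twist \<phi>' \<phi> cs = Im (cnj (cis \<phi>) * Pi_prod \<phi>' \<phi> cs $ 1 $ 1 * Pi_prod \<phi>' \<phi> cs $ 1 $ 2)"

lemma cis_mult_cnj: "cis \<phi> * cnj (cis \<phi>) = 1"
  by (simp add: cis_cnj cis_mult)

lemma energy_Cons_MA:
  "energy \<phi>' \<phi> (True # cs)
     = ((cosh \<phi>')\<^sup>2 + (sinh \<phi>')\<^sup>2) * energy \<phi>' \<phi> cs
       - 4 * cosh \<phi>' * sinh \<phi>' * twist \<phi>' \<phi> cs"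
  unfolding energy_def twist_def Pi_prod_Cons_MA
  by (rule norm_power2_sum_twisted_step[OF cis_mult_cnj])

lemma twist_Cons_MA:
  "twist \<phi>' \<phi> (True # cs)
     = cosh \<phi>' * sinh \<phi>' * energy \<phi>' \<phi> cs
       - ((cosh \<phi>')\<^sup>2 + (sinh \<phi>')\<^sup>2) * twist \<phi>' \<phi> cs"
  unfolding energy_def twist_def Pi_prod_Cons_MA by (rule Im_twisted_step[OF cis_mult_cnj])

lemma energy_Cons_MB: "energy \<phi>' \<phi> (False # cs) = energy \<phi>' \<phi> cs"
  unfolding energy_def Pi_prod_Cons_MB by (simp add: norm_mult)

lemma twist_Cons_MB: "twist \<phi>' \<phi> (False # cs) = - twist \<phi>' \<phi> cs"
  unfolding twist_def Pi_prod_Cons_MB by (simp add: algebra_simps)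

lemma sum_bool_lists_length_Suc:
  fixes f :: "bool list \<Rightarrow> 'a::comm_monoid_add"
  shows "(\<Sum>cs | length cs = Suc n. f cs)
       = (\<Sum>cs | length cs = n. f (True # cs)) + (\<Sum>cs | length cs = n. f (False # cs))"
proof -
  let ?L = "{cs :: bool list. length cs = n}"
  have "finite ?L"
    using finite_lists_length_eq[of "UNIV :: bool set" n] by simp
  have "{cs :: bool list. length cs = Suc n} = (\<lambda>(cs, c). c # cs) ` (?L \<times> UNIV)"
    using lists_length_Suc_eq[of UNIV n] by simp
  then have "(\<Sum>cs | length cs = Suc n. f cs) = (\<Sum>(cs, c) \<in> ?L \<times> UNIV. f (c # cs))"
    by (simp add: sum.reindex inj_on_def case_prod_beta')
  also have "\<dots> = (\<Sum>cs \<in> ?L. \<Sum>c \<in> UNIV. f (c # cs))"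
    by (rule sum.cartesian_product[symmetric])
  also have "\<dots> = (\<Sum>cs \<in> ?L. f (True # cs)) + (\<Sum>cs \<in> ?L. f (False # cs))"
    by (simp add: UNIV_bool sum.distrib add.commute)
  finally show ?thesis .
qed

definition energy_sum :: "real \<Rightarrow> real \<Rightarrow> nat \<Rightarrow> real" where
  "energy_sum \<phi>' \<phi> n = (\<Sum>cs | length cs = n. energy \<phi>' \<phi> cs)"

definition twist_sum :: "real \<Rightarrow> real \<Rightarrow> nat \<Rightarrow> real" where
  "twist_sum \<phi>' \<phi> n = (\<Sum>cs | length cs = n. twist \<phi>' \<phi> cs)"

lemma energy_sum_0: "energy_sum \<phi>' \<phi> 0 = 1"
  and twist_sum_0: "twist_sum \<phi>' \<phi> 0 = 0"
  by (simp_all add: energy_sum_def twist_sum_def energy_def twist_def Pi_prod_def mat_def)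

lemma energy_sum_Suc:
  "energy_sum \<phi>' \<phi> (Suc n)
     = 2 * (cosh \<phi>')\<^sup>2 * energy_sum \<phi>' \<phi> n
       - 4 * cosh \<phi>' * sinh \<phi>' * twist_sum \<phi>' \<phi> n"
proof -
  have "energy_sum \<phi>' \<phi> (Suc n)
      = (\<Sum>cs | length cs = n. energy \<phi>' \<phi> (True # cs))
        + (\<Sum>cs | length cs = n. energy \<phi>' \<phi> (False # cs))"
    unfolding energy_sum_def by (rule sum_bool_lists_length_Suc)
  also have "\<dots> = ((cosh \<phi>')\<^sup>2 + (sinh \<phi>')\<^sup>2) * energy_sum \<phi>' \<phi> n
      - 4 * cosh \<phi>' * sinh \<phi>' * twist_sum \<phi>' \<phi> n + energy_sum \<phi>' \<phi> n"
    by (simp add: energy_Cons_MA energy_Cons_MB energy_sum_def twist_sum_def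
        sum_subtractf sum_distrib_left)
  finally show ?thesis
    using cosh_square_eq[of \<phi>'] by (simp add: algebra_simps)
qed

lemma twist_sum_Suc:
  "twist_sum \<phi>' \<phi> (Suc n)
     = cosh \<phi>' * sinh \<phi>' * energy_sum \<phi>' \<phi> n
       - 2 * (cosh \<phi>')\<^sup>2 * twist_sum \<phi>' \<phi> n"
proof -
  have "twist_sum \<phi>' \<phi> (Suc n)
      = (\<Sum>cs | length cs = n. twist \<phi>' \<phi> (True # cs))
        + (\<Sum>cs | length cs = n. twist \<phi>' \<phi> (False # cs))"
    unfolding twist_sum_def by (rule sum_bool_lists_length_Suc)
  also have "\<dots> = cosh \<phi>' * sinh \<phi>' * energy_sum \<phi>' \<phi> n
      - ((cosh \<phi>')\<^sup>2 + (sinh \<phi>')\<^sup>2) * twist_sum \<phi>' \<phi> n - twist_sum \<phi>' \<phi> n"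
    by (simp add: twist_Cons_MA twist_Cons_MB energy_sum_def twist_sum_def
        sum_subtractf sum_distrib_left sum_negf)
  finally show ?thesis
    using cosh_square_eq[of \<phi>'] by (simp add: algebra_simps)
qed

lemma energy_sum_Suc_Suc:
  "energy_sum \<phi>' \<phi> (Suc (Suc n)) = (2 * cosh \<phi>')\<^sup>2 * energy_sum \<phi>' \<phi> n"
proof -
  have "(cosh \<phi>')\<^sup>2 = (sinh \<phi>')\<^sup>2 + 1"
    by (rule cosh_square_eq)
  then show ?thesis
    unfolding energy_sum_Suc[of _ _ "Suc n"] energy_sum_Suc[of _ _ n] twist_sum_Suc
    by algebra
qed

lemma energy_sum_eq: "energy_sum \<phi>' \<phi> n = 2 ^ n * cosh \<phi>' ^ (n + n mod 2)"
proof (induction n rule: nat_induct2)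
  case 0
  show ?case by (simp add: energy_sum_0)
next
  case 1
  show ?case by (simp add: energy_sum_Suc energy_sum_0 twist_sum_0 power2_eq_square)
next
  case (step n)
  have "energy_sum \<phi>' \<phi> (n + 2) = (2 * cosh \<phi>')\<^sup>2 * (2 ^ n * cosh \<phi>' ^ (n + n mod 2))"
    using step by (simp add: energy_sum_Suc_Suc)
  also have "\<dots> = 2 ^ (n + 2) * cosh \<phi>' ^ (n + 2 + (n + 2) mod 2)"
    by (simp add: power_add power_mult_distrib power2_eq_square)
  finally show ?case .
qed

lemma Enorm_eq: "Enorm \<phi>' \<phi> n = cosh \<phi>' ^ (n + n mod 2)"
proof -
  let ?L = "{cs :: bool list. length cs = n}"
  have "finite ?L" and "card ?L = 2 ^ n"
    using finite_lists_length_eq[of "UNIV :: bool set" n]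
      card_lists_length_eq[of "UNIV :: bool set" n]
    by simp_all
  moreover have "?L \<noteq> {}"
    using length_replicate[of n True] by blast
  ultimately show ?thesis
    unfolding Enorm_def
    by (simp add: integral_pmf_of_set energy_sum_eq[unfolded energy_sum_def energy_def])
qed

lemma ln_power_parity_limit:
  fixes c :: real
  assumes "c > 0"
  shows "(\<lambda>n. ln (c ^ (n + n mod 2)) / (2 * real n)) \<longlonglongrightarrow> ln c / 2"
proof -
  have "(\<lambda>n. real (n mod 2) / real n) \<longlonglongrightarrow> 0"
  proof (rule Lim_null_comparison)
    show "\<forall>\<^sub>F n in sequentially. norm (real (n mod 2) / real n) \<le> inverse (real n)"
      by (intro always_eventually allI) (simp add: divide_inverse mult_left_le_one_le)
    show "(\<lambda>n. inverse (real n)) \<longlonglongrightarrow> 0"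
      by (rule lim_inverse_n)
  qed
  then have "(\<lambda>n. ln c / 2 * (1 + real (n mod 2) / real n)) \<longlonglongrightarrow> ln c / 2 * (1 + 0)"
    by (intro tendsto_mult_left tendsto_add tendsto_const)
  then have lim: "(\<lambda>n. ln c / 2 * (1 + real (n mod 2) / real n)) \<longlonglongrightarrow> ln c / 2"
    by simp
  show ?thesis
  proof (rule Lim_transform_eventually[OF lim])
    show "\<forall>\<^sub>F n in sequentially.
        ln c / 2 * (1 + real (n mod 2) / real n) = ln (c ^ (n + n mod 2)) / (2 * real n)"
      using eventually_gt_at_top[of 0] by eventually_elim (simp add: assms ln_realpow field_simps)
  qed
qed

theorem mainTheorem5:
  fixes \<phi>' \<phi> :: real
  assumes "\<phi>' \<noteq> 0"
  shows "(\<forall>k::nat. k \<ge> 1 \<longrightarrow>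
            Enorm \<phi>' \<phi> (2*k - 1) = (cosh \<phi>') ^ (2*k) \<and>
            Enorm \<phi>' \<phi> (2*k) = (cosh \<phi>') ^ (2*k))
       \<and> ((\<lambda>n. ln (Enorm \<phi>' \<phi> n) / (2 * real n)) \<longlonglongrightarrow> ln (cosh \<phi>') / 2)
       \<and> ln (cosh \<phi>') / 2 > 0"
proof (intro conjI allI impI)
  fix k :: nat
  assume "k \<ge> 1"
  then show "Enorm \<phi>' \<phi> (2*k - 1) = (cosh \<phi>') ^ (2*k)"
    by (cases k) (simp_all add: Enorm_eq)
  show "Enorm \<phi>' \<phi> (2*k) = (cosh \<phi>') ^ (2*k)"
    by (simp add: Enorm_eq)
next
  show "(\<lambda>n. ln (Enorm \<phi>' \<phi> n) / (2 * real n)) \<longlonglongrightarrow> ln (cosh \<phi>') / 2"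
    unfolding Enorm_eq by (rule ln_power_parity_limit) simp
next
  have "cosh \<phi>' > 1"
    using cosh_real_ge_1[of \<phi>'] assms by (simp add: order_le_less)
  then show "ln (cosh \<phi>') / 2 > 0"
    by simp
qed

end
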